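(* Let $\Gamma$ be a layered graph, $n\ge2$, and let $a=\sum_{v\in V_n}\alpha_v v$ be a nonzero element of $B_n$. Then $\kappa_a=\bigcap_{v\in V_n:\,\alpha_v\neq0}\kappa_v$.
   Context: A layered graph is a finite directed graph $\Gamma=(V,E)$ with $V=\bigsqcup_{i=0}^{N}V_i$ such that every edge from $V_i$ goes to $V_{i-1}$; $|v|=i$ for $v\in V_i$, $V_+=\bigsqcup_{i\ge1}V_i$, $V_{\ge k}=\bigsqcup_{i\ge k}V_i$, $S(v)=\{w:(v,w)\in E\}$, nonempty for $v\in V_+$. Over a field $\mathbb F$, $B(\Gamma)=T(V_+)/R_B$, where $T(V_+)$ is the free algebra and $R_B$ is the two-sided ideal generated by $\{vw: v,w\in V_+,(v,w)\notin E\}\cup\{v\sum_{w\in S(v)}w: v\in V_{\ge2}\}$. It is doubly graded, $B(\Gamma)_{m,n}$ being spanned by images of $v_1\cdots v_m$ with $\sum|v_i|=n$. $B_n=B(\Gamma)_{1,n}$ is the span of $V_n$, in which $V_n$ is a basis. For $a\in B_n$ ($n\ge2$), $\kappa_a$ is the kernel of the linear map $B_{n-1}\to B(\Gamma)$, $b\mapsto ab$. *)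

theory Defs
  imports Main
begin

definition layered_graph :: "'v set \<Rightarrow> ('v \<times> 'v) set \<Rightarrow> ('v \<Rightarrow> nat) \<Rightarrow> bool" where
  "layered_graph V E lev \<longleftrightarrow>
     finite V \<and> E \<subseteq> V \<times> V \<and>
     (\<forall>(v,w)\<in>E. lev v \<ge> 1 \<and> lev w + 1 = lev v) \<and>
     (\<forall>v\<in>V. lev v \<ge> 1 \<longrightarrow> (\<exists>w. (v,w) \<in> E))"

definition Vplus :: "'v set \<Rightarrow> ('v \<Rightarrow> nat) \<Rightarrow> 'v set" where
  "Vplus V lev = {v\<in>V. lev v \<ge> 1}"

definition succs :: "('v \<times> 'v) set \<Rightarrow> 'v \<Rightarrow> 'v set" where
  "succs E v = {w. (v,w) \<in> E}"

text \<open>Elements of the free algebra T(V_+) over a field are represented as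
  (finitely supported) coefficient functions on words.\<close>

definition word :: "'v list \<Rightarrow> ('v list \<Rightarrow> 'a::field)" where
  "word u = (\<lambda>x. if x = u then 1 else 0)"

definition lmul :: "'v \<Rightarrow> ('v list \<Rightarrow> 'a::field) \<Rightarrow> ('v list \<Rightarrow> 'a)" where
  "lmul v f = (\<lambda>x. case x of [] \<Rightarrow> 0 | y # ys \<Rightarrow> if y = v then f ys else 0)"

definition rmul :: "'v \<Rightarrow> ('v list \<Rightarrow> 'a::field) \<Rightarrow> ('v list \<Rightarrow> 'a)" where
  "rmul v f = (\<lambda>x. if x \<noteq> [] \<and> last x = v then f (butlast x) else 0)"

definition RB_gens :: "'v set \<Rightarrow> ('v \<times> 'v) set \<Rightarrow> ('v \<Rightarrow> nat) \<Rightarrow> ('v list \<Rightarrow> 'a::field) set" where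
  "RB_gens V E lev =
     {word [v, w] | v w. v \<in> Vplus V lev \<and> w \<in> Vplus V lev \<and> (v, w) \<notin> E} \<union>
     {(\<lambda>x. \<Sum>w\<in>succs E v. word [v, w] x) | v. v \<in> V \<and> lev v \<ge> 2}"

inductive_set RB :: "'v set \<Rightarrow> ('v \<times> 'v) set \<Rightarrow> ('v \<Rightarrow> nat) \<Rightarrow> ('v list \<Rightarrow> 'a::field) set"
  for V E lev where
  gen: "g \<in> RB_gens V E lev \<Longrightarrow> g \<in> RB V E lev"
| zero: "(\<lambda>_. 0) \<in> RB V E lev"
| add: "f \<in> RB V E lev \<Longrightarrow> g \<in> RB V E lev \<Longrightarrow> (\<lambda>x. f x + g x) \<in> RB V E lev"
| smult: "f \<in> RB V E lev \<Longrightarrow> (\<lambda>x. c * f x) \<in> RB V E lev"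
| lmul: "f \<in> RB V E lev \<Longrightarrow> v \<in> Vplus V lev \<Longrightarrow> lmul v f \<in> RB V E lev"
| rmul: "f \<in> RB V E lev \<Longrightarrow> v \<in> Vplus V lev \<Longrightarrow> rmul v f \<in> RB V E lev"

text \<open>An element of B_n is given by its coefficient vector (alpha v) on the basis V_n.\<close>

definition in_Bn :: "'v set \<Rightarrow> ('v \<Rightarrow> nat) \<Rightarrow> nat \<Rightarrow> ('v \<Rightarrow> 'a::field) \<Rightarrow> bool" where
  "in_Bn V lev n \<alpha> \<longleftrightarrow> (\<forall>v. \<alpha> v \<noteq> 0 \<longrightarrow> v \<in> V \<and> lev v = n)"

text \<open>Product in T(V_+) of two degree-one (in the first grading) elements.\<close>

definition prod1 :: "('v \<Rightarrow> 'a::field) \<Rightarrow> ('v \<Rightarrow> 'a) \<Rightarrow> ('v list \<Rightarrow> 'a)" where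
  "prod1 \<alpha> \<beta> = (\<lambda>x. case x of [v, w] \<Rightarrow> \<alpha> v * \<beta> w | _ \<Rightarrow> 0)"

text \<open>kappa_a = kernel of b \<mapsto> ab from B_{n-1} to B(Gamma) = T(V_+)/R_B.\<close>

definition kappa :: "'v set \<Rightarrow> ('v \<times> 'v) set \<Rightarrow> ('v \<Rightarrow> nat) \<Rightarrow> nat \<Rightarrow> ('v \<Rightarrow> 'a::field) \<Rightarrow> ('v \<Rightarrow> 'a) set" where
  "kappa V E lev n \<alpha> = {\<beta>. in_Bn V lev (n - 1) \<beta> \<and> prod1 \<alpha> \<beta> \<in> RB V E lev}"

definition basis_vec :: "'v \<Rightarrow> ('v \<Rightarrow> 'a::field)" where
  "basis_vec v = (\<lambda>u. if u = v then 1 else 0)"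

end

theory Submission
  imports Defs
begin

text \<open>Every element of R_B vanishes on words of length at most one, and on words of
  length two its coefficient at vw depends only on v as long as (v, w) is an edge; the
  generators have this property and it survives multiplication by letters because those
  produce words of length at least two only from words of length at least one.  Hence
  vb \<in> R_B for b \<in> B_{n-1} forces b to be constant on S(v), and conversely such a b
  is (that constant) times v\<Sum>S(v) plus non-edge words vw.  For a general a the
  coefficient of vw in ab is \<alpha>_v b_w, so ab \<in> R_B gives vb \<in> R_B whenever \<alpha>_v \<noteq> 0,
  and the reverse inclusion is linearity.\<close>

definition edge_constant :: "('v \<times> 'v) set \<Rightarrow> ('v list \<Rightarrow> 'a::field) \<Rightarrow> bool" where
  "edge_constant E f \<longleftrightarrow> (\<forall>x. length x \<le> 1 \<longrightarrow> f x = 0) \<and>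
     (\<forall>v w w'. (v, w) \<in> E \<longrightarrow> (v, w') \<in> E \<longrightarrow> f [v, w] = f [v, w'])"

text \<open>Unfolding the definition into the simplifier loops on the second conjunct, so it is
  used through this destruction rule.\<close>

lemma edge_constantD:
  "edge_constant E f \<Longrightarrow> (v, w) \<in> E \<Longrightarrow> (v, w') \<in> E \<Longrightarrow> f [v, w] = f [v, w']"
  unfolding edge_constant_def by blast

lemma layered_graph_finite: "layered_graph V E lev \<Longrightarrow> finite V"
  by (simp add: layered_graph_def)

lemma finite_succs: "layered_graph V E lev \<Longrightarrow> finite (succs E v)"
  by (rule finite_subset[of _ V]) (auto simp: layered_graph_def succs_def)

lemma RB_sum:
  assumes "finite A" "\<And>i. i \<in> A \<Longrightarrow> f i \<in> RB V E lev"
  shows "(\<lambda>x. \<Sum>i\<in>A. f i x) \<in> RB V E lev"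
  using assms
proof (induction A rule: finite_induct)
  case empty
  then show ?case by (simp add: RB.zero)
next
  case (insert a A)
  then have "(\<lambda>x. f a x + (\<Sum>i\<in>A. f i x)) \<in> RB V E lev"
    by (intro RB.add) auto
  then show ?case using insert by simp
qed

lemma sum_scaled_word_pairs:
  assumes "finite A"
  shows "(\<Sum>w\<in>A. c w * word [v, w] x :: 'a::field) =
           (case x of [a, b] \<Rightarrow> if a = v \<and> b \<in> A then c b else 0 | _ \<Rightarrow> 0)"
proof -
  have "(\<Sum>w\<in>A. c w * word [v, w] [a, b]) = (if a = v \<and> b \<in> A then c b else 0)" for a b
  proof (cases "a = v")
    case True
    have "(\<Sum>w\<in>A. c w * word [v, w] [a, b]) = (\<Sum>w\<in>A. if b = w then c w else 0)"
      using True by (intro sum.cong) (auto simp: word_def)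
    then show ?thesis using True assms by simp
  qed (simp add: word_def)
  moreover have "(\<Sum>w\<in>A. c w * word [v, w] x) = 0" if "\<nexists>a b. x = [a, b]"
    using that by (auto simp: word_def)
  ultimately show ?thesis
    by (auto split: list.split)
qed

corollary sum_word_pairs:
  "finite A \<Longrightarrow> (\<Sum>w\<in>A. word [v, w] x :: 'a::field) =
     (case x of [a, b] \<Rightarrow> if a = v \<and> b \<in> A then 1 else 0 | _ \<Rightarrow> 0)"
  using sum_scaled_word_pairs[of A "\<lambda>_. 1"] by simp

lemma edge_constant_RB_gens:
  fixes g :: "'v list \<Rightarrow> 'a::field" and V :: "'v set"
  assumes "layered_graph V E lev" "g \<in> RB_gens V E lev"
  shows "edge_constant E g"
  using assms(2)
proof (auto simp: RB_gens_def)
  fix v w :: 'v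
  assume "(v, w) \<notin> E"
  then show "edge_constant E (word [v, w] :: 'v list \<Rightarrow> 'a)"
    by (auto simp: edge_constant_def word_def)
next
  fix v :: 'v
  show "edge_constant E (\<lambda>x. \<Sum>w\<in>succs E v. word [v, w] x :: 'a)"
    unfolding edge_constant_def sum_word_pairs[OF finite_succs[OF assms(1)]]
    by (auto simp: succs_def split: list.split)
qed

lemma edge_constant_RB:
  assumes "layered_graph V E lev" "f \<in> RB V E lev"
  shows "edge_constant E f"
  using assms(2)
proof (induction rule: RB.induct)
  case (gen g)
  then show ?case by (rule edge_constant_RB_gens[OF assms(1)])
next
  case zero
  then show ?case by (simp add: edge_constant_def)
next
  case (add f g)
  then show ?case unfolding edge_constant_def by (metis add.right_neutral)
next
  case (smult f c)
  then show ?case unfolding edge_constant_def by (metis mult_zero_right)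
next
  case (lmul f v)
  then have "f [] = 0" "\<And>w. f [w] = 0" by (simp_all add: edge_constant_def)
  then show ?case by (auto simp: edge_constant_def lmul_def split: list.split)
next
  case (rmul f v)
  then have "f [] = 0" "\<And>w. f [w] = 0" by (simp_all add: edge_constant_def)
  moreover have "f (butlast x) = 0" if "length x \<le> 1" for x
    using that \<open>f [] = 0\<close> by (cases x) auto
  ultimately show ?case unfolding edge_constant_def rmul_def by auto
qed

lemma prod1_basis_vec:
  "prod1 (basis_vec v) \<beta> = (\<lambda>x. case x of [a, b] \<Rightarrow> if a = v then \<beta> b else 0 | _ \<Rightarrow> 0)"
  by (auto simp: prod1_def basis_vec_def split: list.split)

lemma prod1_basis_vec_in_RB:
  fixes V :: "'v set" and \<beta> :: "'v \<Rightarrow> 'a::field"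
  assumes G: "layered_graph V E lev" and v: "v \<in> V" "lev v \<ge> 2"
    and \<beta>: "in_Bn V lev (lev v - 1) \<beta>"
    and const: "\<And>w w'. (v, w) \<in> E \<Longrightarrow> (v, w') \<in> E \<Longrightarrow> \<beta> w = \<beta> w'"
  shows "prod1 (basis_vec v) \<beta> \<in> RB V E lev"
proof -
  obtain w0 where w0: "(v, w0) \<in> E"
    using G v by (auto simp: layered_graph_def)
  define A where "A = {w\<in>V. \<beta> w \<noteq> 0 \<and> w \<notin> succs E v}"
  have finA: "finite A"
    using layered_graph_finite[OF G] by (simp add: A_def)
  have decomp: "prod1 (basis_vec v) \<beta> =
      (\<lambda>x. \<beta> w0 * (\<Sum>w\<in>succs E v. word [v, w] x) + (\<Sum>w\<in>A. \<beta> w * word [v, w] x))"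
  proof
    fix x :: "'v list"
    show "prod1 (basis_vec v) \<beta> x =
        \<beta> w0 * (\<Sum>w\<in>succs E v. word [v, w] x) + (\<Sum>w\<in>A. \<beta> w * word [v, w] x)"
      unfolding prod1_basis_vec sum_word_pairs[OF finite_succs[OF G]]
        sum_scaled_word_pairs[OF finA]
      using const[OF _ w0] \<beta> by (auto simp: A_def succs_def in_Bn_def split: list.split)
  qed
  have generator: "(\<lambda>x. \<Sum>w\<in>succs E v. word [v, w] x) \<in> RB V E lev"
    using v by (intro RB.gen) (auto simp: RB_gens_def)
  have non_edge: "word [v, w] \<in> RB V E lev" if "w \<in> A" for w
  proof -
    have "w \<in> Vplus V lev" "v \<in> Vplus V lev" "(v, w) \<notin> E"
      using that \<beta> v by (auto simp: A_def in_Bn_def Vplus_def succs_def)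
    then show ?thesis
      by (intro RB.gen) (auto simp: RB_gens_def)
  qed
  have "(\<lambda>x. \<Sum>w\<in>A. \<beta> w * word [v, w] x) \<in> RB V E lev"
    by (rule RB_sum[OF finA]) (rule RB.smult[OF non_edge])
  then show ?thesis
    unfolding decomp by (rule RB.add[OF RB.smult[OF generator]])
qed

lemma kappa_basis_vec:
  assumes G: "layered_graph V E lev" and v: "v \<in> V" "lev v = n" "n \<ge> 2"
  shows "kappa V E lev n (basis_vec v :: 'v \<Rightarrow> 'a::field) =
           {\<beta>. in_Bn V lev (n - 1) \<beta> \<and> (\<forall>w w'. (v, w) \<in> E \<longrightarrow> (v, w') \<in> E \<longrightarrow> \<beta> w = \<beta> w')}"
proof (intro equalityI subsetI CollectI conjI allI impI)
  fix \<beta> :: "'v \<Rightarrow> 'a" and w w'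
  assume "\<beta> \<in> kappa V E lev n (basis_vec v)" "(v, w) \<in> E" "(v, w') \<in> E"
  then have "edge_constant E (prod1 (basis_vec v) \<beta>)"
    by (intro edge_constant_RB[OF G]) (simp add: kappa_def)
  from edge_constantD[OF this \<open>(v, w) \<in> E\<close> \<open>(v, w') \<in> E\<close>] show "\<beta> w = \<beta> w'"
    by (simp add: prod1_basis_vec)
next
  fix \<beta> :: "'v \<Rightarrow> 'a"
  assume "\<beta> \<in> kappa V E lev n (basis_vec v)"
  then show "in_Bn V lev (n - 1) \<beta>" by (simp add: kappa_def)
next
  fix \<beta> :: "'v \<Rightarrow> 'a"
  assume "\<beta> \<in> {\<beta>. in_Bn V lev (n - 1) \<beta> \<and>
             (\<forall>w w'. (v, w) \<in> E \<longrightarrow> (v, w') \<in> E \<longrightarrow> \<beta> w = \<beta> w')}"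
  then show "\<beta> \<in> kappa V E lev n (basis_vec v)"
    using prod1_basis_vec_in_RB[OF G v(1)] v by (auto simp: kappa_def)
qed

lemma prod1_eq_sum_basis_vec:
  fixes \<alpha> \<beta> :: "'v \<Rightarrow> 'a::field"
  assumes "finite S" "{v. \<alpha> v \<noteq> 0} \<subseteq> S"
  shows "prod1 \<alpha> \<beta> = (\<lambda>x. \<Sum>v\<in>S. \<alpha> v * prod1 (basis_vec v) \<beta> x)"
proof
  fix x :: "'v list"
  have "(\<Sum>v\<in>S. \<alpha> v * prod1 (basis_vec v) \<beta> x) =
          (\<Sum>v\<in>S. case x of [a, b] \<Rightarrow> if v = a then \<alpha> a * \<beta> b else 0 | _ \<Rightarrow> 0)"
    by (rule sum.cong) (auto simp: prod1_basis_vec split: list.split)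
  also have "\<dots> = prod1 \<alpha> \<beta> x"
    using assms by (auto simp: prod1_def split: list.split)
  finally show "prod1 \<alpha> \<beta> x = (\<Sum>v\<in>S. \<alpha> v * prod1 (basis_vec v) \<beta> x)" ..
qed

theorem mainTheorem8:
  fixes V :: "'v set" and E :: "('v \<times> 'v) set" and lev :: "'v \<Rightarrow> nat"
    and n :: nat and \<alpha> :: "'v \<Rightarrow> 'a::field"
  assumes "layered_graph V E lev"
    and "n \<ge> 2"
    and "in_Bn V lev n \<alpha>"
    and "\<alpha> \<noteq> (\<lambda>_. 0)"
  shows "kappa V E lev n \<alpha> =
           (\<Inter>v\<in>{v\<in>V. lev v = n \<and> \<alpha> v \<noteq> 0}. kappa V E lev n (basis_vec v :: 'v \<Rightarrow> 'a))"
proof (intro equalityI subsetI INT_I)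
  fix \<beta> v
  assume \<beta>: "\<beta> \<in> kappa V E lev n \<alpha>" and v: "v \<in> {v\<in>V. lev v = n \<and> \<alpha> v \<noteq> 0}"
  have ec: "edge_constant E (prod1 \<alpha> \<beta>)"
    using \<beta> by (intro edge_constant_RB[OF assms(1)]) (simp add: kappa_def)
  have "\<beta> w = \<beta> w'" if "(v, w) \<in> E" "(v, w') \<in> E" for w w'
    using edge_constantD[OF ec that] v by (simp add: prod1_def)
  moreover have "in_Bn V lev (n - 1) \<beta>"
    using \<beta> by (simp add: kappa_def)
  ultimately show "\<beta> \<in> kappa V E lev n (basis_vec v)"
    using kappa_basis_vec[OF assms(1) _ _ assms(2)] v by blast
next
  define S where "S = {v\<in>V. lev v = n \<and> \<alpha> v \<noteq> 0}"
  fix \<beta> :: "'v \<Rightarrow> 'a"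
  assume \<beta>: "\<beta> \<in> (\<Inter>v\<in>S. kappa V E lev n (basis_vec v))"
  have supp: "{v. \<alpha> v \<noteq> 0} \<subseteq> S"
    using assms(3) by (auto simp: S_def in_Bn_def)
  have "finite S"
    using layered_graph_finite[OF assms(1)] by (simp add: S_def)
  obtain v0 where "v0 \<in> S" using assms(4) supp by auto
  then have "in_Bn V lev (n - 1) \<beta>" using \<beta> by (auto simp: kappa_def)
  moreover have "prod1 \<alpha> \<beta> \<in> RB V E lev"
  proof -
    have "(\<lambda>x. \<Sum>v\<in>S. \<alpha> v * prod1 (basis_vec v) \<beta> x) \<in> RB V E lev"
      using \<beta> by (intro RB_sum[OF \<open>finite S\<close>] RB.smult) (auto simp: kappa_def)
    then show ?thesis
      by (simp only: prod1_eq_sum_basis_vec[OF \<open>finite S\<close> supp])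
  qed
  ultimately show "\<beta> \<in> kappa V E lev n \<alpha>" by (simp add: kappa_def)
qed

end
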